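(* Let $p,n\in\mathbb{N}$ with $p\ge1$ even, $n\ge p+\frac p2$, and $r\in\mathbb{N}$ with $r\le p$. For $j=1,\dots,n$ let $\bm u_j$ have components $u_{i,j}=\sqrt{\tfrac{2}{n}}\,c_j\sin\!\big(\tfrac{j\pi}{n}(i-\tfrac12)\big)$, $i=1,\dots,n$, where $c_n=1/\sqrt2$ and $c_j=1$ for $j<n$. Then $\overline{X}^{p,r,0}\bm u_j=\lambda_j\bm u_j$ with $\lambda_j=n^{2r-1}g_p^r\big(\tfrac{j\pi}{n}\big)$, and these are all the eigenvalues of $\overline{X}^{p,r,0}$.
   Context: Cardinal B-spline: $\mathcal{N}_0(t)=1$ for $t\in[0,1)$, $0$ otherwise; $\mathcal{N}_p(t)=\frac{t}{p}\mathcal{N}_{p-1}(t)+\frac{p+1-t}{p}\mathcal{N}_{p-1}(t-1)$, $p\ge1$. Reduced-space basis ($p$ even): $C_c(x)=\mathcal{N}_p\big(nx-c+\tfrac{p+1}{2}\big)$, $\overline{N}^p_{i,0}(x)=\sum_{m\in\mathbb{Z}}\big(C_{i-\frac12+2mn}(x)-C_{-(i-\frac12)+2mn}(x)\big)$, $x\in[0,1]$, $i=1,\dots,n$. $\overline{X}^{p,r,0}_{i,j}=\int_0^1(\overline{N}^p_{i,0})^{(r)}(\overline{N}^p_{j,0})^{(r)}\,\mathrm{d}x$. Symbol: $g_p^r(\theta)=(-1)^r\mathcal{N}_{2p+1}^{(2r)}(p+1)+2(-1)^r\sum_{k=1}^p\mathcal{N}_{2p+1}^{(2r)}(p+1-k)\cos(k\theta)$.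 *)

theory Defs
  imports "HOL-Analysis.Analysis" "Jordan_Normal_Form.Char_Poly"
begin

fun cardB :: "nat \<Rightarrow> real \<Rightarrow> real" where
  "cardB 0 t = (if 0 \<le> t \<and> t < 1 then 1 else 0)"
| "cardB (Suc p) t = t / real (Suc p) * cardB p t
      + (real (Suc p) + 1 - t) / real (Suc p) * cardB p (t - 1)"

definition nderiv :: "nat \<Rightarrow> (real \<Rightarrow> real) \<Rightarrow> real \<Rightarrow> real" where
  "nderiv r f = (deriv ^^ r) f"

definition Cshift :: "nat \<Rightarrow> nat \<Rightarrow> real \<Rightarrow> real \<Rightarrow> real" where
  "Cshift p n c x = cardB p (real n * x - c + (real p + 1) / 2)"

definition Nbar :: "nat \<Rightarrow> nat \<Rightarrow> nat \<Rightarrow> real \<Rightarrow> real" where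
  "Nbar p n i x = (\<Sum>\<^sub>\<infinity> m::int.
      Cshift p n (real i - 1/2 + 2 * of_int m * real n) x
    - Cshift p n (-(real i - 1/2) + 2 * of_int m * real n) x)"

definition Xbar :: "nat \<Rightarrow> nat \<Rightarrow> nat \<Rightarrow> nat \<Rightarrow> nat \<Rightarrow> real" where
  "Xbar p r n i j = integral {0..1} (\<lambda>x. nderiv r (Nbar p n i) x * nderiv r (Nbar p n j) x)"

text \<open>The n x n matrix (0-based indices shifted by one).\<close>
definition Xmat :: "nat \<Rightarrow> nat \<Rightarrow> nat \<Rightarrow> real mat" where
  "Xmat p r n = mat n n (\<lambda>(i, j). Xbar p r n (i + 1) (j + 1))"

definition gsym :: "nat \<Rightarrow> nat \<Rightarrow> real \<Rightarrow> real" where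
  "gsym p r \<theta> = (-1) ^ r * nderiv (2 * r) (cardB (2 * p + 1)) (real p + 1)
     + 2 * (-1) ^ r * (\<Sum>k = 1..p. nderiv (2 * r) (cardB (2 * p + 1)) (real p + 1 - real k) * cos (real k * \<theta>))"

definition cco :: "nat \<Rightarrow> nat \<Rightarrow> real" where
  "cco n j = (if j = n then 1 / sqrt 2 else 1)"

text \<open>Vector u_j with components u_{i,j}, i = 1..n (stored 0-based).\<close>
definition uvec :: "nat \<Rightarrow> nat \<Rightarrow> real vec" where
  "uvec n j = vec n (\<lambda>i. sqrt (2 / real n) * cco n j * sin (real j * pi / real n * (real (i + 1) - 1/2)))"

end

theory Submission
  imports Defs
begin

(* The substitution t = n x turns the r-th derivative of the reduced basis function Nbar_i on
   [0, 1] into n^r times phi(t - i) - phi(t - (1 - i)) - phi(t - (2n + 1 - i)), where phi is the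
   r-th derivative of the centred B-spline. The integral of phi(t - a) phi(t - b) over the whole
   line is (-1)^r N_{2p+1}^{(2r)}(p + 1 - (a - b)), a Fourier coefficient of the symbol g_p^r.
   Folding the line onto [0, n] by the reflections in 0 and n shows that X is n^{2r-1} times a
   Toeplitz-minus-Hankel matrix built from these coefficients. The DST-II vectors u_j diagonalise
   such a matrix, with eigenvalues the symbol at j pi / n, and since they form an orthonormal basis
   there are no other eigenvalues. *)

section \<open>Alternating binomial sums\<close>

lemma alternating_binomial_sum_Suc:
  fixes f :: "nat \<Rightarrow> real"
  shows "(\<Sum>k\<le>Suc m. (-1)^k * real (Suc m choose k) * f k)
       = (\<Sum>k\<le>m. (-1)^k * real (m choose k) * (f k - f (Suc k)))"
proof -
  have "(\<Sum>k\<le>Suc m. (-1)^k * real (Suc m choose k) * f k)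
      = f 0 + (\<Sum>k\<le>m. (-1)^(Suc k) * real (Suc m choose Suc k) * f (Suc k))"
    by (subst sum.atMost_Suc_shift) simp
  also have "\<dots> = f 0 + (\<Sum>k\<le>m. (-1)^(Suc k) * real (m choose k) * f (Suc k))
       + (\<Sum>k\<le>m. (-1)^(Suc k) * real (m choose Suc k) * f (Suc k))"
  proof -
    have "(-1)^(Suc k) * real (Suc m choose Suc k) * f (Suc k) = (-1)^(Suc k) * real (m choose k) * f (Suc k)
       + (-1)^(Suc k) * real (m choose Suc k) * f (Suc k)" for k
      by (simp add: algebra_simps)
    then show ?thesis by (simp only: sum.distrib add.assoc)
  qed
  also have "(\<Sum>k\<le>m. (-1)^(Suc k) * real (m choose Suc k) * f (Suc k))
      = (\<Sum>k\<le>Suc m. (-1)^k * real (m choose k) * f k) - f 0"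
    by (subst sum.atMost_Suc_shift) simp
  also have "(\<Sum>k\<le>Suc m. (-1)^k * real (m choose k) * f k) = (\<Sum>k\<le>m. (-1)^k * real (m choose k) * f k)"
    by (simp add: sum.atMost_Suc)
  also have "f 0 + (\<Sum>k\<le>m. (-1)^(Suc k) * real (m choose k) * f (Suc k))
       + ((\<Sum>k\<le>m. (-1)^k * real (m choose k) * f k) - f 0)
       = (\<Sum>k\<le>m. (-1)^k * real (m choose k) * (f k - f (Suc k)))"
    by (simp add: sum_subtractf right_diff_distrib sum_negf)
  finally show ?thesis .
qed

lemma alternating_binomial_sum_power_eq_0:
  "j < m \<Longrightarrow> (\<Sum>k\<le>m. (-1)^k * real (m choose k) * (x - real k)^j) = 0"
proof (induction m arbitrary: j)
  case 0
  then show ?case by simp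
next
  case (Suc m)
  have diff: "(x - real k)^j - (x - real (Suc k))^j
      = - (\<Sum>i<j. real (j choose i) * (x - real k)^i * (-1)^(j-i))" for k
  proof -
    have "(x - real (Suc k))^j = ((x - real k) + (-1))^j"
      by (simp add: algebra_simps)
    also have "\<dots> = (\<Sum>i\<le>j. real (j choose i) * (x - real k)^i * (-1)^(j-i))"
      by (rule binomial_ring)
    also have "\<dots> = (\<Sum>i<j. real (j choose i) * (x - real k)^i * (-1)^(j-i)) + (x - real k)^j"
      by (simp add: lessThan_Suc_atMost[symmetric])
    finally show ?thesis by simp
  qed
  have "(\<Sum>k\<le>Suc m. (-1)^k * real (Suc m choose k) * (x - real k)^j)
      = - (\<Sum>k\<le>m. \<Sum>i<j. (-1)^k * real (m choose k) * (real (j choose i) * (x - real k)^i * (-1)^(j-i)))"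
    unfolding alternating_binomial_sum_Suc diff by (simp add: sum_distrib_left sum_negf)
  also have "\<dots> = - (\<Sum>i<j. \<Sum>k\<le>m. (-1)^k * real (m choose k) * (real (j choose i) * (x - real k)^i * (-1)^(j-i)))"
    by (subst sum.swap) (rule refl)
  also have "\<dots> = - (\<Sum>i<j. real (j choose i) * (-1)^(j-i) * (\<Sum>k\<le>m. (-1)^k * real (m choose k) * (x - real k)^i))"
    by (simp add: sum_distrib_left mult_ac)
  also have "\<dots> = 0"
    using Suc by simp
  finally show ?case .
qed

lemma alternating_binomial_sum_reflect:
  fixes f :: "nat \<Rightarrow> real"
  shows "(\<Sum>k\<le>M. (-1)^k * real (M choose k) * f (M - k))
       = (-1)^M * (\<Sum>k\<le>M. (-1)^k * real (M choose k) * f k)"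
proof -
  have "(\<Sum>k\<le>M. (-1)^k * real (M choose k) * f (M - k))
      = (\<Sum>k\<le>M. (-1)^(M - k) * real (M choose (M - k)) * f k)"
    by (rule sum.reindex_bij_witness[where i="\<lambda>k. M - k" and j="\<lambda>k. M - k"]) auto
  also have "\<dots> = (\<Sum>k\<le>M. (-1)^M * ((-1)^k * real (M choose k) * f k))"
    by (intro sum.cong refl) (simp add: binomial_symmetric[symmetric] power_diff field_simps)
  finally show ?thesis
    by (simp add: sum_distrib_left)
qed

lemma alternating_binomial_sum_mult:
  fixes f :: "nat \<Rightarrow> real"
  shows "(\<Sum>k\<le>N. \<Sum>l\<le>N. (-1)^k * real (N choose k) * ((-1)^l * real (N choose l) * f (k + l)))
       = (\<Sum>m\<le>2*N. (-1)^m * real (2*N choose m) * f m)"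
proof -
  define G where "G k l = (-1)^k * real (N choose k) * ((-1)^l * real (N choose l) * f (k + l))" for k l
  have "(\<Sum>k\<le>N. \<Sum>l\<le>N. G k l) = (\<Sum>(k,l)\<in>{(k,l). k + l \<le> 2*N}. G k l)"
    unfolding sum.cartesian_product
  proof (rule sum.mono_neutral_left)
    show "finite {(k,l). k + l \<le> 2*N}"
      by (rule finite_subset[of _ "{..2*N}\<times>{..2*N}"]) auto
  qed (auto simp: G_def)
  also have "\<dots> = (\<Sum>m\<le>2*N. \<Sum>i\<le>m. G i (m - i))"
    by (rule sum.triangle_reindex_eq)
  also have "\<dots> = (\<Sum>m\<le>2*N. (-1)^m * real (2*N choose m) * f m)"
  proof (rule sum.cong[OF refl])
    fix m
    have "(\<Sum>i\<le>m. G i (m - i)) = (-1)^m * f m * real (\<Sum>i\<le>m. (N choose i) * (N choose (m - i)))"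
      unfolding G_def of_nat_sum sum_distrib_left
      by (intro sum.cong refl) (simp add: power_diff field_simps)
    then show "(\<Sum>i\<le>m. G i (m - i)) = (-1)^m * real (2*N choose m) * f m"
      using vandermonde[of N N m] by (simp add: mult_2)
  qed
  finally show ?thesis
    unfolding G_def .
qed

lemma alternating_binomial_sum_weights_cancel:
  fixes g :: "nat \<Rightarrow> real"
  shows "(\<Sum>k\<le>Suc q. (-1)^k * real (Suc q choose k) * (real k * g k + (real q + 1 - real k) * g (Suc k))) = 0"
proof -
  have shift: "(\<Sum>k\<le>Suc q. (-1)^k * real (Suc q choose k) * (real k * g k))
     = (\<Sum>k\<le>q. (-1)^(Suc k) * real (Suc q choose Suc k) * (real (Suc k) * g (Suc k)))"
    by (subst sum.atMost_Suc_shift) simp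
  have drop_last: "(\<Sum>k\<le>Suc q. (-1)^k * real (Suc q choose k) * ((real q + 1 - real k) * g (Suc k)))
     = (\<Sum>k\<le>q. (-1)^k * real (Suc q choose k) * ((real q + 1 - real k) * g (Suc k)))"
    by (simp add: sum.atMost_Suc)
  have cancel: "(-1)^(Suc k) * real (Suc q choose Suc k) * (real (Suc k) * g (Suc k))
      + (-1)^k * real (Suc q choose k) * ((real q + 1 - real k) * g (Suc k)) = 0" if "k \<le> q" for k
  proof -
    have e1: "real (Suc k) * real (Suc q choose Suc k) = real (Suc q) * real (q choose k)"
      using Suc_times_binomial[of k q] by (metis of_nat_mult)
    have e2: "real (Suc q - k) * real (Suc q choose k) = real (Suc q) * real (q choose k)"
      using binomial_absorb_comp[of "Suc q" k] by (metis diff_Suc_1 of_nat_mult)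
    have e3: "real (Suc q - k) = real q + 1 - real k" using that by simp
    have h: "(real q + 1 - real k) * real (Suc q choose k) = real (Suc k) * real (Suc q choose Suc k)"
      using e1 e2 e3 by metis
    have "(-1)^(Suc k) * real (Suc q choose Suc k) * (real (Suc k) * g (Suc k))
      + (-1)^k * real (Suc q choose k) * ((real q + 1 - real k) * g (Suc k))
      = (-1)^k * g (Suc k) * ((real q + 1 - real k) * real (Suc q choose k) - real (Suc k) * real (Suc q choose Suc k))"
      by (simp only: power_Suc) (simp only: algebra_simps)
    then show ?thesis using h by simp
  qed
  have "(\<Sum>k\<le>Suc q. (-1)^k * real (Suc q choose k) * (real k * g k + (real q + 1 - real k) * g (Suc k)))
      = (\<Sum>k\<le>Suc q. (-1)^k * real (Suc q choose k) * (real k * g k))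
      + (\<Sum>k\<le>Suc q. (-1)^k * real (Suc q choose k) * ((real q + 1 - real k) * g (Suc k)))"
    by (simp only: distrib_left sum.distrib)
  also have "\<dots> = (\<Sum>k\<le>q. (-1)^(Suc k) * real (Suc q choose Suc k) * (real (Suc k) * g (Suc k))
      + (-1)^k * real (Suc q choose k) * ((real q + 1 - real k) * g (Suc k)))"
    by (simp only: shift drop_last sum.distrib)
  also have "\<dots> = 0" by (intro sum.neutral ballI cancel) simp
  finally show ?thesis .
qed

section \<open>Truncated powers and derivatives of cardinal B-splines\<close>

definition trunc_pow :: "nat \<Rightarrow> real \<Rightarrow> real" where
  "trunc_pow q x = (if 0 \<le> x then x ^ q else 0)"

lemma cardB_eq_trunc_pow_sum:
  "cardB q t = (\<Sum>k\<le>Suc q. (-1)^k * real (Suc q choose k) * trunc_pow q (t - real k)) / fact q"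
proof (induction q arbitrary: t)
  case 0
  then show ?case by (simp add: trunc_pow_def)
next
  case (Suc q)
  define g where "g k = trunc_pow q (t - real k)" for k
  define a where "a k = (-1)^k * real (Suc q choose k)" for k
  define S1 where "S1 = (\<Sum>k\<le>Suc q. a k * g k)"
  define S2 where "S2 = (\<Sum>k\<le>Suc q. a k * g (Suc k))"
  define S3 where "S3 = (\<Sum>k\<le>Suc (Suc q). (-1)^k * real (Suc (Suc q) choose k) * trunc_pow (Suc q) (t - real k))"
  have S1: "cardB q t = S1 / fact q"
    unfolding S1_def a_def g_def by (rule Suc.IH)
  have S2: "cardB q (t - 1) = S2 / fact q"
    using Suc.IH[of "t - 1"] unfolding S2_def a_def g_def by (simp add: algebra_simps)
  have rec: "cardB (Suc q) t = (t * S1 + (real q + 2 - t) * S2) / (fact q * (real q + 1))"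
    unfolding cardB.simps S1 S2
    by (simp add: field_simps) (simp add: add_divide_distrib[symmetric] diff_divide_distrib[symmetric] algebra_simps)
  have split: "t * g k + (real q + 2 - t) * g (Suc k)
      = (trunc_pow (Suc q) (t - real k) - trunc_pow (Suc q) (t - real (Suc k)))
        + (real k * g k + (real q + 1 - real k) * g (Suc k))" for k
    unfolding g_def trunc_pow_def by (simp add: algebra_simps)
  have "t * S1 + (real q + 2 - t) * S2 = (\<Sum>k\<le>Suc q. a k * (t * g k + (real q + 2 - t) * g (Suc k)))"
    unfolding S1_def S2_def by (simp only: sum_distrib_left sum.distrib[symmetric] algebra_simps)
  also have "\<dots> = (\<Sum>k\<le>Suc q. a k * (trunc_pow (Suc q) (t - real k) - trunc_pow (Suc q) (t - real (Suc k))))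
        + (\<Sum>k\<le>Suc q. a k * (real k * g k + (real q + 1 - real k) * g (Suc k)))"
    unfolding split by (simp only: sum.distrib[symmetric] distrib_left)
  also have "(\<Sum>k\<le>Suc q. a k * (real k * g k + (real q + 1 - real k) * g (Suc k))) = 0"
    using alternating_binomial_sum_weights_cancel[of q g] unfolding a_def by (simp only: mult.assoc)
  also have "(\<Sum>k\<le>Suc q. a k * (trunc_pow (Suc q) (t - real k) - trunc_pow (Suc q) (t - real (Suc k)))) = S3"
    using alternating_binomial_sum_Suc[of "Suc q" "\<lambda>k. trunc_pow (Suc q) (t - real k)"]
    unfolding a_def S3_def by (simp only: mult.assoc)
  finally show ?case
    unfolding rec S3_def by (simp add: field_simps)
qed

text \<open>The value \<open>1/2\<close> of the jump of \<open>trunc_pow_mid 0\<close> makes the reflection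
  identity \<open>trunc_pow_mid_reflect\<close> hold also for \<open>q = 0\<close>; this gives the symmetry of
  the (piecewise constant) \<open>p\<close>-th derivative of \<open>N\<^sub>p\<close> at every point.\<close>
definition trunc_pow_mid :: "nat \<Rightarrow> real \<Rightarrow> real" where
  "trunc_pow_mid q x = (if 0 < x then x ^ q else if x = 0 \<and> q = 0 then 1/2 else 0)"

lemma trunc_pow_mid_eq_trunc_pow: "q \<noteq> 0 \<Longrightarrow> trunc_pow_mid q x = trunc_pow q x"
  by (auto simp: trunc_pow_mid_def trunc_pow_def)

lemma trunc_pow_mid_reflect: "trunc_pow_mid q y = y^q - (-1)^q * trunc_pow_mid q (-y)"
proof -
  have "(-1)^q * (-y)^q = y^q"
    by (simp flip: power_mult_distrib)
  then show ?thesis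
    by (auto simp: trunc_pow_mid_def)
qed

lemma trunc_pow_mid_has_derivative:
  assumes "q \<noteq> 0" "q \<ge> 2 \<or> x \<noteq> 0"
  shows "(trunc_pow_mid q has_real_derivative real q * trunc_pow_mid (q - 1) x) (at x)"
proof -
  consider "x > 0" | "x < 0" | "x = 0" "q \<ge> 2"
    using assms by linarith
  then show ?thesis
  proof cases
    case 1
    have "((\<lambda>y. y^q) has_real_derivative real q * trunc_pow_mid (q - 1) x) (at x)"
      using DERIV_pow[of q x] 1 by (simp add: trunc_pow_mid_def)
    then show ?thesis
      by (rule has_field_derivative_transform_within_open[where S="{0<..}"])
         (use 1 in \<open>auto simp: trunc_pow_mid_def\<close>)
  next
    case 2
    have "((\<lambda>y. 0) has_real_derivative real q * trunc_pow_mid (q - 1) x) (at x)"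
      using 2 by (simp add: trunc_pow_mid_def)
    then show ?thesis
      by (rule has_field_derivative_transform_within_open[where S="{..<0}"])
         (use 2 in \<open>auto simp: trunc_pow_mid_def\<close>)
  next
    case 3
    have "trunc_pow_mid (q - 1) = (\<lambda>z. (max z 0) ^ (q - 1))"
      using 3 by (auto simp: trunc_pow_mid_def max_def)
    then have "isCont (trunc_pow_mid (q - 1)) 0"
      by (simp add: continuous_intros)
    moreover have "\<forall>z. trunc_pow_mid q z - trunc_pow_mid q 0 = trunc_pow_mid (q - 1) z * (z - 0)"
      using 3 by (auto simp: trunc_pow_mid_def power_eq_if)
    moreover have "trunc_pow_mid (q - 1) 0 = real q * trunc_pow_mid (q - 1) 0"
      using 3 by (simp add: trunc_pow_mid_def)
    ultimately show ?thesis
      using 3 unfolding CARAT_DERIV by auto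
  qed
qed

text \<open>For \<open>j < P\<close> this is the \<open>j\<close>-th derivative of \<open>N\<^sub>P\<close> (\<open>nderiv_cardB\<close>); for \<open>j = P\<close>
  it is the piecewise constant \<open>P\<close>-th derivative, with the mean of the one-sided values at the knots.\<close>
definition bspline_deriv :: "nat \<Rightarrow> nat \<Rightarrow> real \<Rightarrow> real" where
  "bspline_deriv P j s =
     (\<Sum>k\<le>Suc P. (-1)^k * real (Suc P choose k) * trunc_pow_mid (P - j) (s - real k)) / fact (P - j)"

lemma bspline_deriv_0: "P \<noteq> 0 \<Longrightarrow> bspline_deriv P 0 s = cardB P s"
  by (simp add: bspline_deriv_def cardB_eq_trunc_pow_sum trunc_pow_mid_eq_trunc_pow)

lemma bspline_deriv_reflect:
  assumes "j \<le> P"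
  shows "bspline_deriv P j u = (-1)^j * bspline_deriv P j (real P + 1 - u)"
proof -
  define q where "q = P - j"
  define S where "S = (\<Sum>k\<le>Suc P. (-1)^k * real (Suc P choose k) * trunc_pow_mid q (real k - u))"
  have "(\<Sum>k\<le>Suc P. (-1)^k * real (Suc P choose k) * trunc_pow_mid q (u - real k))
      = (\<Sum>k\<le>Suc P. (-1)^k * real (Suc P choose k) * (u - real k)^q) - (-1)^q * S"
    unfolding S_def sum_distrib_left sum_subtractf[symmetric]
    by (intro sum.cong refl, subst trunc_pow_mid_reflect) (simp add: algebra_simps)
  also have "(\<Sum>k\<le>Suc P. (-1)^k * real (Suc P choose k) * (u - real k)^q) = 0"
    by (rule alternating_binomial_sum_power_eq_0) (simp add: q_def)
  finally have left: "bspline_deriv P j u = - ((-1)^q * S) / fact q"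
    unfolding bspline_deriv_def q_def by simp
  have "(\<Sum>k\<le>Suc P. (-1)^k * real (Suc P choose k) * trunc_pow_mid q (real P + 1 - u - real k))
      = (\<Sum>k\<le>Suc P. (-1)^k * real (Suc P choose k) * trunc_pow_mid q (real (Suc P - k) - u))"
    by (intro sum.cong refl) (simp add: of_nat_diff algebra_simps)
  also have "\<dots> = (-1)^(Suc P) * S"
    unfolding S_def by (rule alternating_binomial_sum_reflect)
  finally have right: "bspline_deriv P j (real P + 1 - u) = (-1)^(Suc P) * S / fact q"
    unfolding bspline_deriv_def q_def by simp
  have "- ((-1::real)^q) = (-1)^j * (-1)^(Suc P)"
    using assms by (simp add: q_def power_diff field_simps)
  then show ?thesis
    unfolding left right by simp
qed

lemma bspline_deriv_eq_0_neg: "u < 0 \<Longrightarrow> bspline_deriv P j u = 0"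
  by (simp add: bspline_deriv_def trunc_pow_mid_def)

lemma bspline_deriv_eq_0_nonpos: "j < P \<Longrightarrow> u \<le> 0 \<Longrightarrow> bspline_deriv P j u = 0"
  by (simp add: bspline_deriv_def trunc_pow_mid_def)

lemma bspline_deriv_eq_0_above: "j \<le> P \<Longrightarrow> u > real P + 1 \<Longrightarrow> bspline_deriv P j u = 0"
  by (subst bspline_deriv_reflect) (auto intro: bspline_deriv_eq_0_neg)

lemma bspline_deriv_has_derivative:
  assumes "j < P" "P - j \<ge> 2 \<or> s \<notin> \<int>"
  shows "(bspline_deriv P j has_real_derivative bspline_deriv P (Suc j) s) (at s)"
proof -
  define q where "q = P - j"
  have q: "q \<noteq> 0" "P - Suc j = q - 1"
    using assms by (auto simp: q_def)
  have "((\<lambda>s. trunc_pow_mid q (s - real k)) has_real_derivative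
          real q * trunc_pow_mid (q - 1) (s - real k)) (at s)" for k
  proof -
    have "q \<ge> 2 \<or> s - real k \<noteq> 0"
      using assms unfolding q_def by (cases "s = real k") auto
    then have "(trunc_pow_mid q has_real_derivative real q * trunc_pow_mid (q - 1) (s - real k))
        (at (s + - real k))"
      using trunc_pow_mid_has_derivative[OF q(1)] by simp
    then have "((\<lambda>s. trunc_pow_mid q (s + - real k)) has_real_derivative
          real q * trunc_pow_mid (q - 1) (s - real k)) (at s)"
      by (simp only: DERIV_shift)
    then show ?thesis
      by simp
  qed
  then have "((\<lambda>s. (\<Sum>k\<le>Suc P. (-1)^k * real (Suc P choose k) * trunc_pow_mid q (s - real k)) / fact q)
      has_real_derivative (\<Sum>k\<le>Suc P. (-1)^k * real (Suc P choose k)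
          * (real q * trunc_pow_mid (q - 1) (s - real k))) / fact q) (at s)"
    by (intro DERIV_cdivide DERIV_sum DERIV_cmult)
  moreover have "(\<Sum>k\<le>Suc P. (-1)^k * real (Suc P choose k) * (real q * trunc_pow_mid (q - 1) (s - real k)))
      / fact q = bspline_deriv P (Suc j) s"
  proof -
    have "fact q = real q * fact (q - 1)"
      using q(1) by (simp add: fact_reduce)
    moreover have "(\<Sum>k\<le>Suc P. (-1)^k * real (Suc P choose k) * (real q * trunc_pow_mid (q - 1) (s - real k)))
        = real q * (\<Sum>k\<le>Suc P. (-1)^k * real (Suc P choose k) * trunc_pow_mid (q - 1) (s - real k))"
      by (subst sum_distrib_left) (rule sum.cong, auto)
    ultimately show ?thesis
      unfolding bspline_deriv_def q(2) using q(1) by simp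
  qed
  ultimately show ?thesis
    unfolding bspline_deriv_def q_def by simp
qed

lemma nderiv_eq_on_open:
  assumes "open V" "\<And>x. x \<in> V \<Longrightarrow> F x = G 0 x"
    and "\<And>j x. j < r \<Longrightarrow> x \<in> V \<Longrightarrow> (G j has_real_derivative G (Suc j) x) (at x)"
  shows "j \<le> r \<Longrightarrow> x \<in> V \<Longrightarrow> nderiv j F x = G j x"
proof (induction j arbitrary: x)
  case 0
  then show ?case
    using assms(2) by (simp add: nderiv_def)
next
  case (Suc j)
  have "(nderiv j F has_real_derivative G (Suc j) x) (at x)"
    by (rule has_field_derivative_transform_within_open[OF assms(3)[of j x] assms(1) Suc.prems(2)])
       (use Suc in auto)
  then show ?case
    by (simp add: nderiv_def DERIV_imp_deriv)
qed

lemma nderiv_cardB: "j < P \<Longrightarrow> nderiv j (cardB P) x = bspline_deriv P j x"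
  by (rule nderiv_eq_on_open[where V=UNIV and r="P - 1"])
     (auto simp: bspline_deriv_0 intro: bspline_deriv_has_derivative)

section \<open>Products of B-spline derivatives\<close>

lemma has_integral_power_mult_power_01:
  "((\<lambda>u. u^a * (1 - u)^b) has_integral fact a * fact b / fact (a + b + 1)) {0..1::real}"
proof -
  have "((\<lambda>u. u^a * (1 - u)^b) has_integral Beta (real a + 1) (real b + 1)) {0..1}"
  proof (rule has_integral_spike_finite[OF _ _ has_integral_Beta_real])
    show "u^a * (1 - u)^b = u powr (real a + 1 - 1) * (1 - u) powr (real b + 1 - 1)" if "u \<in> {0..1} - {0, 1}" for u
      using that by (simp add: powr_realpow)
  qed auto
  moreover have "Gamma (real k + 1) = fact k" for k
    using Gamma_fact[of k] by (simp add: add.commute)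
  moreover have "real a + 1 + (real b + 1) = real (a + b + 1) + 1"
    by simp
  ultimately show ?thesis
    unfolding Beta_def by (simp only:)
qed

lemma has_integral_power_mult_power:
  fixes K L :: real
  assumes "K < L"
  shows "((\<lambda>t. (t - K)^a * (L - t)^b) has_integral
           (L - K)^(a+b+1) * (fact a * fact b / fact (a+b+1))) {K..L}"
proof -
  define D where "D = L - K"
  have D: "D > 0"
    using assms unfolding D_def by simp
  define f where "f u = u^a * (1 - u)^b" for u :: real
  have f: "(f has_integral fact a * fact b / fact (a + b + 1)) (cbox 0 1)"
    unfolding f_def using has_integral_power_mult_power_01 by simp
  have "(\<lambda>x. (1 / (1/D)) *\<^sub>R x + - ((1 / (1/D)) *\<^sub>R (- K / D))) = (\<lambda>x. D * x + K)"
    using D by (auto simp: field_simps)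
  then have "(\<lambda>x. (1 / (1/D)) *\<^sub>R x + - ((1 / (1/D)) *\<^sub>R (- K / D))) ` cbox 0 1 = {K..L}"
    using D by (simp add: image_affinity_atLeastAtMost D_def)
  then have "((\<lambda>x. f ((x - K) / D)) has_integral D * (fact a * fact b / fact (a + b + 1))) {K..L}"
    using has_integral_affinity[OF f, of "1/D" "- K / D"] D by (simp add: diff_divide_distrib)
  then have "((\<lambda>x. D^(a+b) * f ((x - K) / D)) has_integral
      D^(a+b) * (D * (fact a * fact b / fact (a + b + 1)))) {K..L}"
    by (rule has_integral_mult_right)
  moreover have "D^(a+b) * f ((x - K) / D) = (x - K)^a * (L - x)^b" for x
  proof -
    have "1 - (x - K) / D = (L - x) / D"
      using D unfolding D_def by (simp add: field_simps)
    then show ?thesis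
      unfolding f_def using D by (simp add: power_divide power_add field_simps)
  qed
  ultimately show ?thesis
    unfolding D_def by (simp add: power_add mult_ac)
qed

lemma trunc_pow_mid_mult_has_integral:
  "((\<lambda>t. trunc_pow_mid a (t - K) * trunc_pow_mid b (L - t)) has_integral
     (fact a * fact b / fact (a+b+1) * trunc_pow (a+b+1) (L - K))) UNIV"
proof (cases "K < L")
  case True
  have restricted: "((\<lambda>t. if t \<in> {K..L} then (t - K)^a * (L - t)^b else 0) has_integral
      (L - K)^(a+b+1) * (fact a * fact b / fact (a+b+1))) UNIV"
    unfolding has_integral_restrict_UNIV by (rule has_integral_power_mult_power[OF True])
  have "((\<lambda>t. trunc_pow_mid a (t - K) * trunc_pow_mid b (L - t)) has_integral
      (L - K)^(a+b+1) * (fact a * fact b / fact (a+b+1))) UNIV"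
    by (rule has_integral_spike_finite[where S="{K, L}", OF _ _ restricted]) (auto simp: trunc_pow_mid_def)
  then show ?thesis
    using True by (simp add: trunc_pow_def mult_ac)
next
  case False
  have "((\<lambda>t. trunc_pow_mid a (t - K) * trunc_pow_mid b (L - t)) has_integral 0) UNIV"
    by (rule has_integral_spike_finite[where S="{K}", OF _ _ has_integral_0])
       (use False in \<open>auto simp: trunc_pow_mid_def\<close>)
  moreover have "trunc_pow (a+b+1) (L - K) = 0"
    using False by (auto simp: trunc_pow_def)
  ultimately show ?thesis
    by simp
qed

lemma trunc_pow_mid_sum_mult_has_integral:
  fixes c x y :: "nat \<Rightarrow> real"
  shows "((\<lambda>s. (\<Sum>k\<le>M. c k * trunc_pow_mid q (s - x k)) * (\<Sum>l\<le>M. c l * trunc_pow_mid q (y l - s))) has_integral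
           fact q * fact q / fact (q+q+1) * (\<Sum>k\<le>M. \<Sum>l\<le>M. c k * c l * trunc_pow_mid (q+q+1) (y l - x k))) UNIV"
proof -
  have "(\<Sum>k\<le>M. c k * trunc_pow_mid q (s - x k)) * (\<Sum>l\<le>M. c l * trunc_pow_mid q (y l - s))
      = (\<Sum>k\<le>M. \<Sum>l\<le>M. c k * c l * (trunc_pow_mid q (s - x k) * trunc_pow_mid q (y l - s)))" for s
    unfolding sum_product by (intro sum.cong refl) (simp add: mult_ac)
  moreover have "((\<lambda>s. \<Sum>k\<le>M. \<Sum>l\<le>M. c k * c l * (trunc_pow_mid q (s - x k) * trunc_pow_mid q (y l - s)))
      has_integral (\<Sum>k\<le>M. \<Sum>l\<le>M. c k * c l * (fact q * fact q / fact (q+q+1) * trunc_pow (q+q+1) (y l - x k)))) UNIV"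
    by (intro has_integral_sum has_integral_mult_right trunc_pow_mid_mult_has_integral) auto
  ultimately show ?thesis
    by (simp add: trunc_pow_mid_eq_trunc_pow sum_distrib_left mult_ac)
qed

lemma bspline_deriv_mult_has_integral:
  assumes "r \<le> p"
  shows "((\<lambda>s. bspline_deriv p r (s + a) * bspline_deriv p r (s + b)) has_integral
           (-1)^r * bspline_deriv (2*p+1) (2*r) (real p + 1 - (b - a))) UNIV"
proof -
  define q where "q = p - r"
  define c where "c k = (-1)^k * real (Suc p choose k)" for k
  define x y where "x k = real k - a" "y l = real p + 1 - b - real l" for k l :: nat
  have "bspline_deriv p r (s + a) = (\<Sum>k\<le>Suc p. c k * trunc_pow_mid q (s - x k)) / fact q" for s
  proof -
    have "s + a - real k = s - x k" for k
      unfolding x_y_def by simp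
    then show ?thesis
      unfolding bspline_deriv_def c_def q_def by (simp only:)
  qed
  moreover have "bspline_deriv p r (s + b) = (-1)^r * ((\<Sum>l\<le>Suc p. c l * trunc_pow_mid q (y l - s)) / fact q)" for s
  proof -
    have "real p + 1 - (s + b) - real l = y l - s" for l
      unfolding x_y_def by simp
    then have "bspline_deriv p r (real p + 1 - (s + b)) = (\<Sum>l\<le>Suc p. c l * trunc_pow_mid q (y l - s)) / fact q"
      unfolding bspline_deriv_def c_def q_def by (simp only:)
    then show ?thesis
      by (subst bspline_deriv_reflect[OF assms]) (simp only:)
  qed
  ultimately have "bspline_deriv p r (s + a) * bspline_deriv p r (s + b) = (-1)^r / (fact q * fact q)
      * ((\<Sum>k\<le>Suc p. c k * trunc_pow_mid q (s - x k)) * (\<Sum>l\<le>Suc p. c l * trunc_pow_mid q (y l - s)))" for s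
    by simp
  then have "((\<lambda>s. bspline_deriv p r (s + a) * bspline_deriv p r (s + b)) has_integral (-1)^r / (fact q * fact q)
      * (fact q * fact q / fact (q+q+1) * (\<Sum>k\<le>Suc p. \<Sum>l\<le>Suc p. c k * c l * trunc_pow_mid (q+q+1) (y l - x k)))) UNIV"
    by (simp only:) (intro has_integral_mult_right trunc_pow_mid_sum_mult_has_integral)
  also have "(\<Sum>k\<le>Suc p. \<Sum>l\<le>Suc p. c k * c l * trunc_pow_mid (q+q+1) (y l - x k))
      = (\<Sum>m\<le>2 * Suc p. (-1)^m * real (2 * Suc p choose m) * trunc_pow_mid (q+q+1) (real p + 1 - (b - a) - real m))"
    unfolding alternating_binomial_sum_mult[symmetric] c_def x_y_def
    by (intro sum.cong refl) (simp add: algebra_simps)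
  also have "(-1)^r / (fact q * fact q) * (fact q * fact q / fact (q+q+1) * \<dots>)
      = (-1)^r * bspline_deriv (2*p+1) (2*r) (real p + 1 - (b - a))"
  proof -
    have "2 * p + 1 - 2 * r = q + q + 1" "Suc (2 * p + 1) = 2 * Suc p"
      using assms unfolding q_def by auto
    then show ?thesis
      unfolding bspline_deriv_def by (simp add: sum_divide_distrib)
  qed
  finally show ?thesis .
qed

section \<open>The symbol coefficients as overlap integrals\<close>

definition symbol_coeff :: "nat \<Rightarrow> nat \<Rightarrow> real \<Rightarrow> real" where
  "symbol_coeff p r d = (-1)^r * bspline_deriv (2*p+1) (2*r) (real p + 1 - d)"

lemma gsym_eq_symbol_coeff:
  assumes "r \<le> p"
  shows "gsym p r \<theta> = symbol_coeff p r 0 + 2 * (\<Sum>d\<in>{1..int p}. symbol_coeff p r (of_int d) * cos (of_int d * \<theta>))"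
proof -
  have "(\<Sum>d\<in>{1..int p}. symbol_coeff p r (of_int d) * cos (of_int d * \<theta>))
      = (\<Sum>k = 1..p. symbol_coeff p r (real k) * cos (real k * \<theta>))"
    by (rule sum.reindex_bij_witness[where i="\<lambda>k. int k" and j="\<lambda>d. nat d"]) auto
  then show ?thesis
    using assms by (simp add: gsym_def symbol_coeff_def nderiv_cardB sum_distrib_left mult_ac)
qed

lemma symbol_coeff_minus:
  assumes "r \<le> p"
  shows "symbol_coeff p r (- d) = symbol_coeff p r d"
proof -
  have "bspline_deriv (2*p+1) (2*r) (real p + 1 - - d)
      = (-1)^(2*r) * bspline_deriv (2*p+1) (2*r) (real (2*p+1) + 1 - (real p + 1 - - d))"
    by (rule bspline_deriv_reflect) (use assms in simp)
  also have "real (2*p+1) + 1 - (real p + 1 - - d) = real p + 1 - d"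
    by simp
  also have "(-1::real)^(2*r) = 1"
    by simp
  finally show ?thesis
    unfolding symbol_coeff_def by simp
qed

lemma symbol_coeff_eq_0: "r \<le> p \<Longrightarrow> real p + 1 \<le> d \<Longrightarrow> symbol_coeff p r d = 0"
  unfolding symbol_coeff_def by (simp add: bspline_deriv_eq_0_nonpos)

text \<open>For even \<open>p\<close>, the \<open>r\<close>-th derivative of \<open>C\<^sub>c\<close> is
  \<open>x \<mapsto> n\<^sup>r * centred_deriv p r (n * x - c - 1/2)\<close>.\<close>
definition centred_deriv :: "nat \<Rightarrow> nat \<Rightarrow> real \<Rightarrow> real" where
  "centred_deriv p r t = bspline_deriv p r (t + real (p div 2) + 1)"

lemma centred_deriv_eq_0:
  assumes "even p" "r \<le> p" "t < - real (p div 2) - 1 \<or> t > real (p div 2)"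
  shows "centred_deriv p r t = 0"
  using assms bspline_deriv_eq_0_neg[of "t + real (p div 2) + 1" p r]
    bspline_deriv_eq_0_above[of r p "t + real (p div 2) + 1"]
  unfolding centred_deriv_def by (auto elim!: evenE)

lemma centred_deriv_reflect:
  assumes "even p" "r \<le> p"
  shows "centred_deriv p r (-1 - t) = (-1)^r * centred_deriv p r t"
proof -
  have "real p + 1 - (-1 - t + real (p div 2) + 1) = t + real (p div 2) + 1"
    using assms(1) by (auto elim!: evenE)
  then show ?thesis
    unfolding centred_deriv_def by (subst bspline_deriv_reflect[OF assms(2)]) simp
qed

lemma centred_deriv_mult_reflect:
  assumes "even p" "r \<le> p"
  shows "centred_deriv p r (-1 - s) * centred_deriv p r (-1 - t) = centred_deriv p r s * centred_deriv p r t"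
proof -
  have "(-1::real)^r * (-1)^r = 1"
    by (simp flip: power_add)
  then show ?thesis
    unfolding centred_deriv_reflect[OF assms] by (simp add: algebra_simps)
qed

lemma centred_deriv_mult_has_integral:
  assumes "r \<le> p"
  shows "((\<lambda>t. centred_deriv p r (t - a) * centred_deriv p r (t - b)) has_integral symbol_coeff p r (a - b)) UNIV"
  using bspline_deriv_mult_has_integral[OF assms, of "real (p div 2) + 1 - a" "real (p div 2) + 1 - b"]
  unfolding centred_deriv_def symbol_coeff_def by (simp add: algebra_simps)

lemma integral_fold:
  fixes F :: "real \<Rightarrow> real"
  assumes F: "(F has_integral V) UNIV" and "0 \<le> N" and support: "\<And>t. t \<notin> {-N..2*N} \<Longrightarrow> F t = 0"
  shows "V = integral {0..N} (\<lambda>t. F (-t)) + integral {0..N} F + integral {0..N} (\<lambda>t. F (2*N - t))"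
proof -
  have "(\<lambda>x. if x \<in> {-N..2*N} then F x else 0) = F"
    using support by auto
  then have "(F has_integral V) {-N..2*N}"
    using F has_integral_restrict_UNIV[of "{-N..2*N}" F V] by simp
  then have V: "V = integral {-N..2*N} F" and int: "F integrable_on {-N..2*N}"
    by (auto simp: integral_unique)
  have "integral {-N..2*N} F = integral {-N..0} F + integral {0..N} F + integral {N..2*N} F"
    using Henstock_Kurzweil_Integration.integral_combine[where a="-N" and c=0 and b="2*N" and f=F]
      Henstock_Kurzweil_Integration.integral_combine[where a=0 and c=N and b="2*N" and f=F]
      integrable_on_subinterval[OF int, of 0 "2*N"] \<open>0 \<le> N\<close> int by simp
  also have "integral {-N..0} F = integral {0..N} (\<lambda>t. F (-t))"
    using Henstock_Kurzweil_Integration.integral_reflect_real[of 0 "-N" F] by simp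
  also have "integral {N..2*N} F = integral {0..N} (\<lambda>t. F (2*N - t))"
  proof -
    have "integral {N..2*N} F = integral {N - 2*N..2*N - 2*N} (\<lambda>x. F (x + 2*N))"
      by (rule integral_shift_real_ivl[symmetric])
    also have "\<dots> = integral {0..N} (\<lambda>x. F (- x + 2*N))"
      using Henstock_Kurzweil_Integration.integral_reflect_real[of 0 "-N" "\<lambda>x. F (x + 2*N)"] by simp
    finally show ?thesis
      by simp
  qed
  finally show ?thesis
    using V by simp
qed

definition centred_overlap :: "nat \<Rightarrow> nat \<Rightarrow> nat \<Rightarrow> real \<Rightarrow> real \<Rightarrow> real" where
  "centred_overlap p r n a b = integral {0..real n} (\<lambda>t. centred_deriv p r (t - a) * centred_deriv p r (t - b))"

lemma centred_overlap_eq_0: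
  assumes "\<And>t. 0 \<le> t \<Longrightarrow> t \<le> real n \<Longrightarrow> centred_deriv p r (t - a) = 0 \<or> centred_deriv p r (t - b) = 0"
  shows "centred_overlap p r n a b = 0"
proof -
  have "integral {0..real n} (\<lambda>t. centred_deriv p r (t - a) * centred_deriv p r (t - b))
      = integral {0..real n} (\<lambda>t. 0)"
    by (rule integral_cong) (use assms in auto)
  then show ?thesis
    unfolding centred_overlap_def by simp
qed

lemma centred_overlap_eq_0_disjoint:
  assumes "even p" "r \<le> p" "\<bar>a - b\<bar> > 2 * real (p div 2) + 1"
  shows "centred_overlap p r n a b = 0"
proof (rule centred_overlap_eq_0)
  fix t
  have "t - a < - real (p div 2) - 1 \<or> t - a > real (p div 2) \<or> t - b < - real (p div 2) - 1 \<or> t - b > real (p div 2)"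
    using assms(3) by linarith
  then show "centred_deriv p r (t - a) = 0 \<or> centred_deriv p r (t - b) = 0"
    using centred_deriv_eq_0[OF assms(1,2)] by blast
qed

text \<open>The reflections \<open>t \<mapsto> -t\<close> and \<open>t \<mapsto> 2n - t\<close> fold the line onto \<open>[0, n]\<close>; by
  \<open>centred_deriv_mult_reflect\<close> they turn the shifts \<open>a, b\<close> into \<open>1 - a, 1 - b\<close> and
  \<open>2n + 1 - a, 2n + 1 - b\<close>.\<close>
lemma symbol_coeff_fold:
  assumes "even p" "r \<le> p" "p + p div 2 \<le> n" "1 \<le> a" "a \<le> real n"
  shows "symbol_coeff p r (a - b) = centred_overlap p r n (1 - a) (1 - b) + centred_overlap p r n a b
           + centred_overlap p r n (2 * real n + 1 - a) (2 * real n + 1 - b)"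
proof -
  define F where "F t = centred_deriv p r (t - a) * centred_deriv p r (t - b)" for t
  have "symbol_coeff p r (a - b) = integral {0..real n} (\<lambda>t. F (-t)) + integral {0..real n} F
      + integral {0..real n} (\<lambda>t. F (2 * real n - t))"
  proof (rule integral_fold)
    show "(F has_integral symbol_coeff p r (a - b)) UNIV"
      unfolding F_def by (rule centred_deriv_mult_has_integral[OF assms(2)])
    show "F t = 0" if "t \<notin> {- real n..2 * real n}" for t
    proof -
      have "t - a < - real (p div 2) - 1 \<or> t - a > real (p div 2)"
        using that assms(3-5) by auto
      then show ?thesis
        unfolding F_def using centred_deriv_eq_0[OF assms(1,2)] by simp
    qed
  qed simp
  moreover have "F (-t) = centred_deriv p r (t - (1 - a)) * centred_deriv p r (t - (1 - b))" for t
  proof -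
    have "-t - c = -1 - (t - (1 - c))" for c
      by simp
    then show ?thesis
      unfolding F_def by (simp only: centred_deriv_mult_reflect[OF assms(1,2)])
  qed
  moreover have "F (2 * real n - t)
      = centred_deriv p r (t - (2 * real n + 1 - a)) * centred_deriv p r (t - (2 * real n + 1 - b))" for t
  proof -
    have "2 * real n - t - c = -1 - (t - (2 * real n + 1 - c))" for c
      by simp
    then show ?thesis
      unfolding F_def by (simp only: centred_deriv_mult_reflect[OF assms(1,2)])
  qed
  ultimately show ?thesis
    unfolding centred_overlap_def F_def by simp
qed

text \<open>The three terms come from \<open>C\<^bsub>i-1/2\<^esub>\<close> and its mirror images \<open>C\<^bsub>1/2-i\<^esub>\<close>
  and \<open>C\<^bsub>2n+1/2-i\<^esub>\<close>; all other terms of \<open>Nbar p n i\<close> vanish on \<open>(-1/2, 3/2)\<close>.\<close>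
definition reduced_deriv :: "nat \<Rightarrow> nat \<Rightarrow> nat \<Rightarrow> nat \<Rightarrow> real \<Rightarrow> real" where
  "reduced_deriv p r n i t = centred_deriv p r (t - real i) - centred_deriv p r (t - (1 - real i))
     - centred_deriv p r (t - (2 * real n + 1 - real i))"

lemma integral_reduced_deriv_mult_eq_overlaps:
  fixes p r n i j :: nat
  assumes "r \<le> p"
  defines "a1 \<equiv> real i" and "a2 \<equiv> 1 - real i" and "a3 \<equiv> 2 * real n + 1 - real i"
    and "b1 \<equiv> real j" and "b2 \<equiv> 1 - real j" and "b3 \<equiv> 2 * real n + 1 - real j"
    and "Ov \<equiv> centred_overlap p r n"
  shows "integral {0..real n} (\<lambda>t. reduced_deriv p r n i t * reduced_deriv p r n j t)
       = Ov a1 b1 - Ov a1 b2 - Ov a1 b3 - Ov a2 b1 + Ov a2 b2 + Ov a2 b3 - Ov a3 b1 + Ov a3 b2 + Ov a3 b3"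
proof -
  define f where "f a b t = centred_deriv p r (t - a) * centred_deriv p r (t - b)" for a b t
  have integrable: "f a b integrable_on {0..real n}" for a b
    unfolding f_def using centred_deriv_mult_has_integral[OF assms(1)] integrable_on_subinterval by blast
  have "reduced_deriv p r n i t * reduced_deriv p r n j t = f a1 b1 t - f a1 b2 t - f a1 b3 t - f a2 b1 t
      + f a2 b2 t + f a2 b3 t - f a3 b1 t + f a3 b2 t + f a3 b3 t" for t
    unfolding reduced_deriv_def f_def a1_def a2_def a3_def b1_def b2_def b3_def by (simp add: algebra_simps)
  moreover have "((\<lambda>t. f a1 b1 t - f a1 b2 t - f a1 b3 t - f a2 b1 t + f a2 b2 t + f a2 b3 t
      - f a3 b1 t + f a3 b2 t + f a3 b3 t) has_integral
      Ov a1 b1 - Ov a1 b2 - Ov a1 b3 - Ov a2 b1 + Ov a2 b2 + Ov a2 b3 - Ov a3 b1 + Ov a3 b2 + Ov a3 b3) {0..real n}"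
    unfolding Ov_def centred_overlap_def f_def[symmetric]
    by (intro has_integral_add has_integral_diff integrable_integral integrable)
  ultimately show ?thesis
    by (simp add: integral_unique)
qed

lemma reduced_deriv_mult_integral:
  assumes "even p" "r \<le> p" "p + p div 2 \<le> n" and i: "1 \<le> i" "i \<le> n" and j: "1 \<le> j" "j \<le> n"
  shows "integral {0..real n} (\<lambda>t. reduced_deriv p r n i t * reduced_deriv p r n j t)
       = symbol_coeff p r (real i - real j) - symbol_coeff p r (real i + real j - 1)
         - symbol_coeff p r (real i + real j - 1 - 2 * real n)"
proof -
  define h where "h = real (p div 2)"
  define N where "N = real n"
  define Ov where "Ov = centred_overlap p r n"
  define a1 a2 a3 where "a1 = real i" "a2 = 1 - real i" "a3 = 2 * N + 1 - real i"
  define b1 b2 b3 where "b1 = real j" "b2 = 1 - real j" "b3 = 2 * N + 1 - real j"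
  have hN: "3 * h \<le> N" "1 \<le> N"
    using assms unfolding h_def N_def by (auto elim!: evenE)
  have ij: "1 \<le> real i" "real i \<le> N" "1 \<le> real j" "real j \<le> N"
    using i j unfolding N_def by auto
  note vanish = centred_deriv_eq_0[OF assms(1,2), folded h_def]
  have fold: "symbol_coeff p r (a - b) = Ov (1 - a) (1 - b) + Ov a b + Ov (2 * N + 1 - a) (2 * N + 1 - b)"
    if "1 \<le> a" "a \<le> N" for a b
    using symbol_coeff_fold[OF assms(1-3)] that unfolding Ov_def N_def by simp
  have "symbol_coeff p r (real i + real j - 1) = Ov a2 b1 + Ov a1 b2 + Ov a3 (2 * N + real j)"
    using fold[of "real i" "1 - real j"] ij unfolding a1_a2_a3_def b1_b2_b3_def by (simp add: algebra_simps)
  moreover have "Ov a3 (2 * N + real j) = 0"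
    unfolding Ov_def using hN ij by (intro centred_overlap_eq_0 disjI2 vanish disjI1) (auto simp: N_def)
  moreover have "symbol_coeff p r (real i + real j - 1 - 2 * real n) = Ov a2 (real j - 2 * N) + Ov a1 b3 + Ov a3 b1"
    using fold[of "real i" "2 * N + 1 - real j"] ij
    unfolding a1_a2_a3_def b1_b2_b3_def N_def by (simp add: algebra_simps)
  moreover have "Ov a2 (real j - 2 * N) = 0"
    unfolding Ov_def using hN ij by (intro centred_overlap_eq_0 disjI2 vanish) (auto simp: N_def)
  moreover have "symbol_coeff p r (real i - real j) = Ov a2 b2 + Ov a1 b1 + Ov a3 b3"
    using fold[of "real i" "real j"] ij unfolding a1_a2_a3_def b1_b2_b3_def by simp
  moreover have "Ov a2 b3 = 0" "Ov a3 b2 = 0"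
    unfolding Ov_def a1_a2_a3_def b1_b2_b3_def using hN ij
    by (auto intro!: centred_overlap_eq_0_disjoint[OF assms(1,2)] simp: h_def N_def)
  moreover have "integral {0..real n} (\<lambda>t. reduced_deriv p r n i t * reduced_deriv p r n j t)
      = Ov a1 b1 - Ov a1 b2 - Ov a1 b3 - Ov a2 b1 + Ov a2 b2 + Ov a2 b3 - Ov a3 b1 + Ov a3 b2 + Ov a3 b3"
    unfolding Ov_def a1_a2_a3_def b1_b2_b3_def N_def by (rule integral_reduced_deriv_mult_eq_overlaps[OF assms(2)])
  ultimately show ?thesis
    by (simp add: algebra_simps)
qed

section \<open>The Gram matrix of the reduced basis\<close>

lemma Cshift_eq_centred_deriv:
  assumes "even p" "p \<noteq> 0"
  shows "Cshift p n c x = centred_deriv p 0 (real n * x - c - 1/2)"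
proof -
  have "real n * x - c + (real p + 1) / 2 = real n * x - c - 1/2 + real (p div 2) + 1"
    using assms(1) by (auto elim!: evenE)
  then show ?thesis
    unfolding Cshift_def centred_deriv_def bspline_deriv_0[OF assms(2)] by (rule arg_cong)
qed

lemma centred_deriv_far_images_eq_0:
  assumes "even p" "r \<le> p" "3 * real (p div 2) \<le> real n" "1 \<le> real i" "real i \<le> real n"
    and "- real n / 2 < s" "s < 3 * real n / 2" "m \<notin> {0, 1}"
  shows "centred_deriv p r (s - real i - 2 * of_int m * real n) = 0
       \<and> centred_deriv p r (s + real i - 1 - 2 * of_int m * real n) = 0"
proof -
  have vanish: "centred_deriv p r t = 0" if "t < - real (p div 2) - 1 \<or> t > real (p div 2)" for t
    using centred_deriv_eq_0[OF assms(1,2)] that by simp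
  consider "m \<ge> 2" | "m \<le> -1"
    using assms(8) by force
  then show ?thesis
  proof cases
    case 1
    then have "2 * real n \<le> real_of_int m * real n"
      using mult_right_mono[of 2 "real_of_int m" "real n"] by simp
    then show ?thesis
      using assms(3-7) by (intro conjI vanish; linarith)
  next
    case 2
    then have "real_of_int m * real n \<le> - real n"
      using mult_right_mono[of "real_of_int m" "-1" "real n"] by simp
    then show ?thesis
      using assms(3-7) by (intro conjI vanish; linarith)
  qed
qed

lemma Nbar_eq_reduced_deriv:
  assumes "even p" "p \<noteq> 0" "p + p div 2 \<le> n" "1 \<le> i" "i \<le> n" "-1/2 < x" "x < 3/2"
  shows "Nbar p n i x = reduced_deriv p 0 n i (real n * x)"
proof -
  define s where "s = real n * x"
  have n: "3 * real (p div 2) \<le> real n" "0 < real n"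
    using assms by (auto elim!: evenE)
  have i: "1 \<le> real i" "real i \<le> real n"
    using assms(4,5) by auto
  have s: "- real n / 2 < s" "s < 3 * real n / 2"
    using mult_strict_left_mono[OF assms(6) n(2)] mult_strict_left_mono[OF assms(7) n(2)]
    unfolding s_def by linarith+
  define T where "T m = centred_deriv p 0 (s - real i - 2 * of_int m * real n)
      - centred_deriv p 0 (s + real i - 1 - 2 * of_int m * real n)" for m :: int
  have "Nbar p n i x = infsum T UNIV"
    unfolding Nbar_def T_def Cshift_eq_centred_deriv[OF assms(1,2)] s_def by (simp add: algebra_simps)
  also have "\<dots> = infsum T {0, 1}"
    using centred_deriv_far_images_eq_0[OF assms(1) _ n(1) i s] unfolding T_def
    by (intro infsum_cong_neutral) auto
  also have "\<dots> = T 0 + T 1"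
    by simp
  finally have "Nbar p n i x = T 0 + T 1" .
  moreover have "centred_deriv p 0 (s - real i - 2 * real n) = 0"
    using centred_deriv_eq_0[OF assms(1)] s n i by simp
  ultimately show ?thesis
    unfolding T_def reduced_deriv_def s_def by (simp add: algebra_simps)
qed

lemma centred_deriv_comp_has_derivative:
  assumes "j < p" "real n * x \<notin> \<int>" "c \<in> \<int>"
  shows "((\<lambda>x. centred_deriv p j (real n * x - c)) has_real_derivative
           centred_deriv p (Suc j) (real n * x - c) * real n) (at x)"
proof -
  define s where "s = real n * x - c + real (p div 2) + 1"
  have "s \<notin> \<int>"
  proof
    assume "s \<in> \<int>"
    then have "s + c - real (p div 2) - 1 \<in> \<int>"
      using assms(3) by (intro Ints_diff Ints_add) auto
    then show False
      using assms(2) unfolding s_def by simp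
  qed
  then have "(bspline_deriv p j has_real_derivative bspline_deriv p (Suc j) s) (at s)"
    by (intro bspline_deriv_has_derivative[OF assms(1)]) simp
  moreover have "((\<lambda>x. real n * x - c + real (p div 2) + 1) has_real_derivative real n) (at x)"
    by (auto intro!: derivative_eq_intros)
  ultimately show ?thesis
    unfolding centred_deriv_def s_def by (rule DERIV_chain2)
qed

lemma nderiv_Nbar:
  assumes "even p" "p \<noteq> 0" "p + p div 2 \<le> n" "1 \<le> i" "i \<le> n" "r \<le> p"
    and x: "-1/2 < x" "x < 3/2" "real n * x \<notin> \<int>"
  shows "nderiv r (Nbar p n i) x = real n ^ r * reduced_deriv p r n i (real n * x)"
proof (rule nderiv_eq_on_open[where V="{-1/2<..<3/2} - (\<lambda>x. real n * x) -` \<int>" and r=r])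
  have "closed ((\<lambda>x. real n * x) -` \<int>)"
    by (rule continuous_closed_vimage) (auto intro!: continuous_intros)
  then show "open ({-1/2<..<3/2} - (\<lambda>x. real n * x) -` \<int>)"
    by (intro open_Diff) auto
  show "Nbar p n i y = real n ^ 0 * reduced_deriv p 0 n i (real n * y)"
    if "y \<in> {-1/2<..<3/2} - (\<lambda>x. real n * x) -` \<int>" for y
    using Nbar_eq_reduced_deriv[OF assms(1-5)] that by simp
  show "((\<lambda>x. real n ^ j * reduced_deriv p j n i (real n * x)) has_real_derivative
          real n ^ Suc j * reduced_deriv p (Suc j) n i (real n * y)) (at y)"
    if "j < r" "y \<in> {-1/2<..<3/2} - (\<lambda>x. real n * x) -` \<int>" for j y
  proof -
    have "((\<lambda>x. centred_deriv p j (real n * x - c)) has_real_derivative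
        centred_deriv p (Suc j) (real n * y - c) * real n) (at y)" if "c \<in> \<int>" for c
      using centred_deriv_comp_has_derivative[of j p n y c] \<open>j < r\<close> assms(6) \<open>y \<in> _\<close> that by auto
    then have "((\<lambda>x. real n ^ j * reduced_deriv p j n i (real n * x)) has_real_derivative
        real n ^ j * (centred_deriv p (Suc j) (real n * y - real i) * real n
          - centred_deriv p (Suc j) (real n * y - (1 - real i)) * real n
          - centred_deriv p (Suc j) (real n * y - (2 * real n + 1 - real i)) * real n)) (at y)"
      unfolding reduced_deriv_def by (intro DERIV_cmult DERIV_diff) auto
    then show ?thesis
      unfolding reduced_deriv_def by (simp add: algebra_simps)
  qed
qed (use x assms(6) in auto)

lemma negligible_mult_vimage_Ints:
  fixes c :: real
  assumes "c \<noteq> 0"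
  shows "negligible ((\<lambda>x. c * x) -` \<int>)"
proof -
  have "(\<lambda>x. c * x) -` \<int> = (\<Union>k::int. {of_int k / c})"
    using assms by (auto simp: field_simps elim!: Ints_cases)
  then show ?thesis
    by (auto intro!: negligible_countable_Union)
qed

lemma Xbar_eq_symbol_coeff:
  assumes "even p" "p \<noteq> 0" "p + p div 2 \<le> n" "r \<le> p"
    and i: "1 \<le> i" "i \<le> n" and j: "1 \<le> j" "j \<le> n"
  shows "Xbar p r n i j = real n powi (2 * int r - 1) *
     (symbol_coeff p r (real i - real j) - symbol_coeff p r (real i + real j - 1)
      - symbol_coeff p r (real i + real j - 1 - 2 * real n))"
proof -
  have n: "real n > 0"
    using i by simp
  have "Xbar p r n i j
      = integral {0..1} (\<lambda>x. real n ^ (2*r) * (reduced_deriv p r n i (real n * x) * reduced_deriv p r n j (real n * x)))"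
    unfolding Xbar_def
  proof (rule integral_spike[OF negligible_mult_vimage_Ints])
    show "real n \<noteq> 0"
      using n by simp
  next
    fix x
    assume "x \<in> {0..1} - (\<lambda>x. real n * x) -` \<int>"
    then have x: "-1/2 < x" "x < 3/2" "real n * x \<notin> \<int>"
      by auto
    show "real n ^ (2*r) * (reduced_deriv p r n i (real n * x) * reduced_deriv p r n j (real n * x))
        = nderiv r (Nbar p n i) x * nderiv r (Nbar p n j) x"
      unfolding nderiv_Nbar[OF assms(1-3) i assms(4) x] nderiv_Nbar[OF assms(1-3) j assms(4) x]
      by (simp add: power_mult_distrib mult_ac power2_eq_square flip: power_add mult_2)
  qed
  also have "\<dots> = real n ^ (2*r) / real n * integral {0..real n} (\<lambda>t. reduced_deriv p r n i t * reduced_deriv p r n j t)"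
    using integral_stretch_real[where m="real n" and f="\<lambda>t. reduced_deriv p r n i t * reduced_deriv p r n j t"
        and a=0 and b="real n"] n
    by (simp add: image_divide_atLeastAtMost)
  also have "real n ^ (2*r) / real n = real n powi (2 * int r - 1)"
    using n power_int_of_nat[of "real n" "2*r"] by (simp add: power_int_diff)
  finally show ?thesis
    by (simp add: reduced_deriv_mult_integral[OF assms(1,4,3) i j])
qed

section \<open>Sine sums\<close>

lemma toeplitz_minus_hankel_sum:
  fixes A s :: "int \<Rightarrow> real" and N i :: int
  assumes s1: "\<And>k. s (1 - k) = - s k" and s2: "\<And>k. s (2*N + 1 - k) = - s k" and "0 \<le> N"
  shows "(\<Sum>j\<in>{1..N}. (A (i - j) - A (i + j - 1) - A (i + j - 1 - 2*N)) * s j)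
       = (\<Sum>k\<in>{1-N..2*N}. A (i - k) * s k)"
proof -
  have "(\<Sum>k\<in>{1-N..0}. A (i - k) * s k) = (\<Sum>j\<in>{1..N}. A (i - (1 - j)) * s (1 - j))"
    by (rule sum.reindex_bij_witness[where i="\<lambda>k. 1 - k" and j="\<lambda>k. 1 - k"]) auto
  also have "\<dots> = - (\<Sum>j\<in>{1..N}. A (i + j - 1) * s j)"
    by (simp add: s1 sum_negf algebra_simps)
  finally have left: "(\<Sum>k\<in>{1-N..0}. A (i - k) * s k) = - (\<Sum>j\<in>{1..N}. A (i + j - 1) * s j)" .
  have "(\<Sum>k\<in>{N+1..2*N}. A (i - k) * s k) = (\<Sum>j\<in>{1..N}. A (i - (2*N + 1 - j)) * s (2*N + 1 - j))"
    by (rule sum.reindex_bij_witness[where i="\<lambda>k. 2*N + 1 - k" and j="\<lambda>k. 2*N + 1 - k"]) auto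
  also have "\<dots> = - (\<Sum>j\<in>{1..N}. A (i + j - 1 - 2*N) * s j)"
    unfolding s2 by (simp add: sum_negf algebra_simps)
  finally have right: "(\<Sum>k\<in>{N+1..2*N}. A (i - k) * s k) = - (\<Sum>j\<in>{1..N}. A (i + j - 1 - 2*N) * s j)" .
  have "{1-N..0} \<union> {1..N} = {1-N..N}" "{1-N..N} \<union> {N+1..2*N} = {1-N..2*N}"
    using \<open>0 \<le> N\<close> by auto
  then have "(\<Sum>k\<in>{1-N..2*N}. A (i - k) * s k) = (\<Sum>k\<in>{1-N..0}. A (i - k) * s k)
      + (\<Sum>k\<in>{1..N}. A (i - k) * s k) + (\<Sum>k\<in>{N+1..2*N}. A (i - k) * s k)"
    using sum.union_disjoint[of "{1-N..0}" "{1..N}" "\<lambda>k. A (i - k) * s k"]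
      sum.union_disjoint[of "{1-N..N}" "{N+1..2*N}" "\<lambda>k. A (i - k) * s k"] by auto
  then show ?thesis
    unfolding left right by (simp add: sum_subtractf left_diff_distrib)
qed

lemma banded_toeplitz_sine_sum:
  fixes A :: "int \<Rightarrow> real" and N i :: int and p :: nat
  assumes even: "\<And>d. A (- d) = A d" and band: "\<And>d. d > int p \<Longrightarrow> A d = 0"
    and "int p \<le> N" "1 \<le> i" "i \<le> N"
  shows "(\<Sum>k\<in>{1-N..2*N}. A (i - k) * sin (\<theta> * (of_int k - 1/2)))
       = (A 0 + 2 * (\<Sum>d\<in>{1..int p}. A d * cos (of_int d * \<theta>))) * sin (\<theta> * (of_int i - 1/2))"
proof -
  define s where "s k = sin (\<theta> * (of_int k - 1/2))" for k :: int
  have band': "A d = 0" if "d < - int p" for d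
    using band[of "-d"] even[of d] that by simp
  have "(\<Sum>k\<in>{1-N..2*N}. A (i - k) * s k) = (\<Sum>d\<in>{i-2*N..i+N-1}. A d * s (i - d))"
    by (rule sum.reindex_bij_witness[where i="\<lambda>d. i - d" and j="\<lambda>k. i - k"]) auto
  also have "\<dots> = (\<Sum>d\<in>{-int p..int p}. A d * s (i - d))"
  proof (rule sum.mono_neutral_right)
    show "{-int p..int p} \<subseteq> {i-2*N..i+N-1}"
      using assms(3-5) by auto
    show "\<forall>d\<in>{i-2*N..i+N-1} - {-int p..int p}. A d * s (i - d) = 0"
      using band band' by fastforce
  qed simp
  also have "\<dots> = (\<Sum>d\<in>{-int p..-1}. A d * s (i - d)) + A 0 * s i + (\<Sum>d\<in>{1..int p}. A d * s (i - d))"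
  proof -
    have "{-int p..int p} = {-int p..-1} \<union> ({0} \<union> {1..int p})"
      by auto
    then show ?thesis
      by (simp add: sum.union_disjoint)
  qed
  also have "(\<Sum>d\<in>{-int p..-1}. A d * s (i - d)) = (\<Sum>d\<in>{1..int p}. A d * s (i + d))"
    by (rule sum.reindex_bij_witness[where i="\<lambda>d. - d" and j="\<lambda>d. - d"]) (auto simp: even)
  also have "(\<Sum>d\<in>{1..int p}. A d * s (i + d)) + A 0 * s i + (\<Sum>d\<in>{1..int p}. A d * s (i - d))
      = A 0 * s i + (\<Sum>d\<in>{1..int p}. A d * (s (i - d) + s (i + d)))"
    by (simp add: sum.distrib algebra_simps)
  also have "(\<Sum>d\<in>{1..int p}. A d * (s (i - d) + s (i + d))) = (\<Sum>d\<in>{1..int p}. 2 * (A d * cos (of_int d * \<theta>)) * s i)"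
  proof (rule sum.cong[OF refl])
    fix d
    have minus: "\<theta> * (of_int (i - d) - 1/2) = \<theta> * (of_int i - 1/2) - of_int d * \<theta>"
      and plus: "\<theta> * (of_int (i + d) - 1/2) = \<theta> * (of_int i - 1/2) + of_int d * \<theta>"
      by (simp_all add: algebra_simps)
    show "A d * (s (i - d) + s (i + d)) = 2 * (A d * cos (of_int d * \<theta>)) * s i"
      unfolding s_def minus plus sin_add sin_diff by (simp add: algebra_simps)
  qed
  finally show ?thesis
    unfolding s_def by (simp add: sum_distrib_left sum_distrib_right algebra_simps)
qed

lemma sin_half_shift_reflect:
  fixes l n :: nat and k :: int
  assumes "n \<noteq> 0"
  defines "\<theta> \<equiv> real l * pi / real n"
  shows "sin (\<theta> * (of_int (1 - k) - 1/2)) = - sin (\<theta> * (of_int k - 1/2))"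
    and "sin (\<theta> * (of_int (2 * int n + 1 - k) - 1/2)) = - sin (\<theta> * (of_int k - 1/2))"
proof -
  have "\<theta> * (of_int (1 - k) - 1/2) = - (\<theta> * (of_int k - 1/2))"
    by (simp add: algebra_simps)
  then show "sin (\<theta> * (of_int (1 - k) - 1/2)) = - sin (\<theta> * (of_int k - 1/2))"
    by simp
  have "\<theta> * (of_int (2 * int n + 1 - k) - 1/2) = 2 * pi * real l - \<theta> * (of_int k - 1/2)"
    using assms unfolding \<theta>_def by (simp add: field_simps)
  moreover have "sin (2 * pi * real l) = 0" "cos (2 * pi * real l) = 1"
    using sin_npi[of "2 * l"] cos_npi[of "2 * l"] by (simp_all add: mult_ac)
  ultimately show "sin (\<theta> * (of_int (2 * int n + 1 - k) - 1/2)) = - sin (\<theta> * (of_int k - 1/2))"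
    by (simp add: sin_diff)
qed

lemma sin_half_mult_sum_cos:
  "2 * sin (\<phi>/2) * (\<Sum>l\<in>{1..M}. cos (real l * \<phi>)) = sin ((real M + 1/2) * \<phi>) - sin (\<phi>/2)"
proof (induction M)
  case 0
  then show ?case by simp
next
  case (Suc M)
  have "(real (Suc M) + 1/2) * \<phi> = real (Suc M) * \<phi> + \<phi>/2" "(real M + 1/2) * \<phi> = real (Suc M) * \<phi> - \<phi>/2"
    by (simp_all add: algebra_simps)
  then have "2 * sin (\<phi>/2) * cos (real (Suc M) * \<phi>) = sin ((real (Suc M) + 1/2) * \<phi>) - sin ((real M + 1/2) * \<phi>)"
    by (simp add: sin_add sin_diff)
  then show ?case
    using Suc.IH by (simp add: algebra_simps)
qed

lemma sum_cos_multiple_pi_div: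
  fixes N m :: nat
  assumes "0 < m" "m < 2 * N"
  defines "\<phi> \<equiv> pi * real m / real N"
  shows "(\<Sum>l\<in>{1..N-1}. cos (real l * \<phi>)) + cos (real N * \<phi>) / 2 = -1/2"
proof -
  have N: "N \<ge> 1"
    using assms by simp
  have pos: "sin (\<phi>/2) > 0"
  proof (rule sin_gt_zero)
    show "0 < \<phi>/2"
      unfolding \<phi>_def using assms by simp
    have "pi * real m < pi * (2 * real N)"
      using assms by simp
    then show "\<phi>/2 < pi"
      unfolding \<phi>_def using N by (simp add: field_simps)
  qed
  have N\<phi>: "real N * \<phi> = real m * pi"
    unfolding \<phi>_def using N by simp
  have "(real (N-1) + 1/2) * \<phi> = real m * pi - \<phi>/2"
    using N N\<phi> by (simp add: of_nat_diff algebra_simps)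
  moreover have "sin (real m * pi - \<phi>/2) = - ((-1)^m * sin (\<phi>/2))"
    by (simp add: sin_diff)
  ultimately have "2 * sin (\<phi>/2) * (\<Sum>l\<in>{1..N-1}. cos (real l * \<phi>)) = - ((-1)^m * sin (\<phi>/2)) - sin (\<phi>/2)"
    using sin_half_mult_sum_cos[of \<phi> "N-1"] by simp
  then have "2 * sin (\<phi>/2) * ((\<Sum>l\<in>{1..N-1}. cos (real l * \<phi>)) + cos (real N * \<phi>) / 2) = 2 * sin (\<phi>/2) * (-1/2)"
    unfolding N\<phi> by (simp add: algebra_simps)
  moreover have "2 * sin (\<phi>/2) \<noteq> 0"
    using pos by simp
  ultimately show ?thesis
    by (metis mult_cancel_left)
qed

lemma cco_sq_sum_cos:
  fixes N m :: nat
  assumes "m < 2 * N"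
  shows "(\<Sum>l\<in>{1..N}. (cco N l)^2 * cos (real l * (pi * real m / real N))) = (if m = 0 then real N - 1/2 else -1/2)"
proof -
  define \<phi> where "\<phi> = pi * real m / real N"
  have N: "N \<ge> 1"
    using assms by simp
  have "(\<Sum>l\<in>{1..N}. (cco N l)^2 * cos (real l * \<phi>)) = (\<Sum>l\<in>{1..N-1}. cos (real l * \<phi>)) + cos (real N * \<phi>) / 2"
  proof -
    have "{1..N} = insert N {1..N-1}"
      using N by auto
    moreover have "(\<Sum>l\<in>{1..N-1}. (cco N l)^2 * cos (real l * \<phi>)) = (\<Sum>l\<in>{1..N-1}. cos (real l * \<phi>))"
      by (rule sum.cong) (auto simp: cco_def)
    moreover have "N \<notin> {1..N-1}"
      using N by auto
    ultimately show ?thesis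
      by (simp add: cco_def power_divide)
  qed
  also have "\<dots> = (if m = 0 then real N - 1/2 else -1/2)"
  proof (cases "m = 0")
    case True
    then show ?thesis
      using N by (simp add: \<phi>_def of_nat_diff)
  next
    case False
    then show ?thesis
      using sum_cos_multiple_pi_div[of m N] assms unfolding \<phi>_def by simp
  qed
  finally show ?thesis
    unfolding \<phi>_def .
qed

lemma dst2_orthogonal:
  fixes N a b :: nat
  assumes "1 \<le> a" "a \<le> N" "1 \<le> b" "b \<le> N"
  shows "(\<Sum>l\<in>{1..N}. (cco N l)^2 * (sin (real l * pi / real N * (real a - 1/2)) * sin (real l * pi / real N * (real b - 1/2))))
       = (if a = b then real N / 2 else 0)"
proof -
  define D where "D m = (\<Sum>l\<in>{1..N}. (cco N l)^2 * cos (real l * (pi * real m / real N)))" for m :: nat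
  define d where "d = (if a \<le> b then b - a else a - b)"
  have "cos (real l * pi / real N * (real a - 1/2) - real l * pi / real N * (real b - 1/2))
      = cos (real l * (pi * real d / real N))" for l
  proof -
    have "real l * pi / real N * (real a - 1/2) - real l * pi / real N * (real b - 1/2) = real l * pi / real N * (real a - real b)"
      by (simp only: right_diff_distrib; linarith)
    moreover have "real a - real b = real d \<or> real a - real b = - real d"
      unfolding d_def by auto
    ultimately show ?thesis
      by (auto simp: mult.assoc)
  qed
  moreover have "cos (real l * pi / real N * (real a - 1/2) + real l * pi / real N * (real b - 1/2))
      = cos (real l * (pi * real (a + b - 1) / real N))" for l
  proof -
    have "real l * pi / real N * (real a - 1/2) + real l * pi / real N * (real b - 1/2)
        = real l * (pi * real (a + b - 1) / real N)"
      using assms by (simp add: of_nat_diff field_simps)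
    then show ?thesis
      by simp
  qed
  ultimately have "(\<Sum>l\<in>{1..N}. (cco N l)^2 * (sin (real l * pi / real N * (real a - 1/2)) * sin (real l * pi / real N * (real b - 1/2))))
      = (D d - D (a + b - 1)) / 2"
    unfolding D_def sin_times_sin sum_subtractf[symmetric] sum_divide_distrib
    by (simp add: algebra_simps)
  also have "D (a + b - 1) = -1/2"
    unfolding D_def using assms by (subst cco_sq_sum_cos) auto
  also have "D d = (if a = b then real N - 1/2 else -1/2)"
    unfolding D_def using assms by (subst cco_sq_sum_cos) (auto simp: d_def)
  finally show ?thesis
    by auto
qed

section \<open>Eigenvalues\<close>

lemma eigenvalue_of_complete_eigensystem:
  fixes A :: "real mat" and u :: "'i \<Rightarrow> real vec" and ev :: "'i \<Rightarrow> real"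
  assumes A: "A \<in> carrier_mat n n" "transpose_mat A = A"
    and u: "\<And>l. l \<in> I \<Longrightarrow> u l \<in> carrier_vec n" "\<And>l. l \<in> I \<Longrightarrow> A *\<^sub>v u l = ev l \<cdot>\<^sub>v u l"
    and complete: "\<And>a c. a < n \<Longrightarrow> c < n \<Longrightarrow> (\<Sum>l\<in>I. u l $ a * u l $ c) = (if a = c then 1 else 0)"
    and "eigenvalue A \<mu>"
  shows "\<exists>l\<in>I. \<mu> = ev l"
proof (rule ccontr)
  assume "\<not> (\<exists>l\<in>I. \<mu> = ev l)"
  obtain v where v: "v \<in> carrier_vec n" "v \<noteq> 0\<^sub>v n" "A *\<^sub>v v = \<mu> \<cdot>\<^sub>v v"
    using \<open>eigenvalue A \<mu>\<close> A(1) unfolding eigenvalue_def eigenvector_def by auto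
  have orthogonal: "scalar_prod (u l) v = 0" if "l \<in> I" for l
  proof -
    have "ev l * scalar_prod (u l) v = scalar_prod (A *\<^sub>v u l) v"
      using u[OF that] v(1) by (simp add: smult_scalar_prod_distrib)
    also have "\<dots> = \<mu> * scalar_prod (u l) v"
      using transpose_vec_mult_scalar[OF A(1) v(1) u(1)[OF that]] A(2) v u(1)[OF that]
      by (simp add: scalar_prod_smult_distrib)
    finally show ?thesis
      using \<open>\<not> (\<exists>l\<in>I. \<mu> = ev l)\<close> that by auto
  qed
  have "v $ c = 0" if "c < n" for c
  proof -
    have "v $ c = (\<Sum>a<n. v $ a * (if a = c then 1 else 0))"
      using that by (simp add: if_distrib cong: if_cong)
    also have "\<dots> = (\<Sum>a<n. v $ a * (\<Sum>l\<in>I. u l $ a * u l $ c))"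
      using that complete by simp
    also have "\<dots> = (\<Sum>l\<in>I. u l $ c * scalar_prod (u l) v)"
      using v(1) u(1) unfolding scalar_prod_def
      by (simp add: sum_distrib_left sum_distrib_right atLeast0LessThan mult_ac) (rule sum.swap)
    also have "\<dots> = 0"
      using orthogonal by simp
    finally show ?thesis .
  qed
  then have "v = 0\<^sub>v n"
    using v(1) by (intro eq_vecI) auto
  with v(2) show False ..
qed

lemma Xmat_symmetric: "transpose_mat (Xmat p r n) = Xmat p r n"
  unfolding Xmat_def by (rule eq_matI) (auto simp: Xbar_def mult.commute)

lemma uvec_nonzero:
  assumes "1 \<le> l" "l \<le> n"
  shows "uvec n l \<noteq> 0\<^sub>v n"
proof
  assume "uvec n l = 0\<^sub>v n"
  then have "uvec n l $ 0 = 0"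
    using assms by simp
  moreover have "uvec n l $ 0 = sqrt (2 / real n) * cco n l * sin (real l * pi / real n * (real (0 + 1) - 1/2))"
    using assms unfolding uvec_def by (subst index_vec) auto
  moreover have "sin (real l * pi / real n * (real (0 + 1) - 1/2)) > 0"
  proof (rule sin_gt_zero)
    have "real l * pi \<le> real n * pi"
      using assms by simp
    then have "real l * pi / real n \<le> pi"
      using assms by (simp add: divide_le_eq)
    moreover have "x / 2 < pi" if "x \<le> pi" for x :: real
      using that pi_gt_zero by linarith
    ultimately have "real l * pi / real n / 2 < pi"
      by blast
    then show "real l * pi / real n * (real (0 + 1) - 1/2) < pi"
      by simp
  qed (use assms in simp)
  moreover have "sqrt (2 / real n) > 0" "cco n l > 0"
    using assms by (auto simp: cco_def)
  ultimately show False
    by (metis mult_pos_pos less_irrefl)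
qed

lemma uvec_complete:
  assumes "a < n" "c < n"
  shows "(\<Sum>l\<in>{1..n}. uvec n l $ a * uvec n l $ c) = (if a = c then 1 else 0)"
proof -
  have "uvec n l $ a * uvec n l $ c = (sqrt (2 / real n) * sqrt (2 / real n)) * ((cco n l)^2
      * (sin (real l * pi / real n * (real (a + 1) - 1/2)) * sin (real l * pi / real n * (real (c + 1) - 1/2))))" for l
    using assms unfolding uvec_def power2_eq_square by (simp only: index_vec mult_ac)
  moreover have "sqrt (2 / real n) * sqrt (2 / real n) = 2 / real n"
    by simp
  ultimately have summand: "uvec n l $ a * uvec n l $ c = 2 / real n * ((cco n l)^2
      * (sin (real l * pi / real n * (real (a + 1) - 1/2)) * sin (real l * pi / real n * (real (c + 1) - 1/2))))" for l
    by simp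
  have "(\<Sum>l\<in>{1..n}. uvec n l $ a * uvec n l $ c) = 2 / real n * (\<Sum>l\<in>{1..n}. (cco n l)^2
      * (sin (real l * pi / real n * (real (a + 1) - 1/2)) * sin (real l * pi / real n * (real (c + 1) - 1/2))))"
    by (simp only: summand sum_distrib_left)
  also have "\<dots> = 2 / real n * (if a + 1 = c + 1 then real n / 2 else 0)"
    by (subst dst2_orthogonal) (use assms in auto)
  finally show ?thesis
    using assms by simp
qed

lemma Xbar_sine_sum:
  assumes "even p" "p \<noteq> 0" "p + p div 2 \<le> n" "r \<le> p" "a < n" "1 \<le> l" "l \<le> n"
  defines "\<theta> \<equiv> real l * pi / real n"
  shows "(\<Sum>b<n. Xbar p r n (a+1) (b+1) * sin (\<theta> * (real b + 1/2)))
       = real n powi (2 * int r - 1) * gsym p r \<theta> * sin (\<theta> * (real a + 1/2))"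
proof -
  define A where "A d = symbol_coeff p r (of_int d)" for d :: int
  define s where "s k = sin (\<theta> * (of_int k - 1/2))" for k :: int
  define K where "K = real n powi (2 * int r - 1)"
  define I N where "I = int a + 1" "N = int n"
  have "(\<Sum>b<n. Xbar p r n (a+1) (b+1) * sin (\<theta> * (real b + 1/2)))
      = (\<Sum>j\<in>{1..N}. K * ((A (I - j) - A (I + j - 1) - A (I + j - 1 - 2 * N)) * s j))"
  proof (rule sum.reindex_bij_witness[where i="\<lambda>j. nat (j - 1)" and j="\<lambda>b. int b + 1"])
    fix b
    assume "b \<in> {..<n}"
    then have "Xbar p r n (a+1) (b+1) = K * (A (I - (int b + 1)) - A (I + (int b + 1) - 1) - A (I + (int b + 1) - 1 - 2 * N))"
      using Xbar_eq_symbol_coeff[OF assms(1-4), of "a+1" "b+1"] assms(5) unfolding A_def K_def I_N_def by simp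
    moreover have "sin (\<theta> * (real b + 1/2)) = s (int b + 1)"
      unfolding s_def by (simp add: algebra_simps)
    ultimately show "K * ((A (I - (int b + 1)) - A (I + (int b + 1) - 1) - A (I + (int b + 1) - 1 - 2 * N)) * s (int b + 1))
        = Xbar p r n (a+1) (b+1) * sin (\<theta> * (real b + 1/2))"
      by simp
  qed (auto simp: I_N_def)
  also have "\<dots> = K * (\<Sum>k\<in>{1-N..2*N}. A (I - k) * s k)"
    using sin_half_shift_reflect[of n l] assms(5) unfolding sum_distrib_left[symmetric] s_def \<theta>_def I_N_def
    by (subst toeplitz_minus_hankel_sum) simp_all
  also have "\<dots> = K * ((A 0 + 2 * (\<Sum>d\<in>{1..int p}. A d * cos (of_int d * \<theta>))) * s I)"
    unfolding s_def
  proof (subst banded_toeplitz_sine_sum)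
    show "A (- d) = A d" for d
      unfolding A_def using symbol_coeff_minus[OF assms(4)] by simp
    show "A d = 0" if "d > int p" for d
      unfolding A_def using symbol_coeff_eq_0[OF assms(4)] that by simp
  qed (use assms(3,5) in \<open>auto simp: I_N_def\<close>)
  finally show ?thesis
    unfolding K_def s_def I_N_def A_def gsym_eq_symbol_coeff[OF assms(4)] by (simp add: algebra_simps)
qed

lemma Xmat_mult_uvec:
  assumes "even p" "p \<noteq> 0" "p + p div 2 \<le> n" "r \<le> p" "1 \<le> l" "l \<le> n"
  shows "Xmat p r n *\<^sub>v uvec n l = (real n powi (2 * int r - 1) * gsym p r (real l * pi / real n)) \<cdot>\<^sub>v uvec n l"
proof (rule eq_vecI)
  fix a
  assume "a < dim_vec ((real n powi (2 * int r - 1) * gsym p r (real l * pi / real n)) \<cdot>\<^sub>v uvec n l)"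
  then have a: "a < n"
    by (simp add: uvec_def)
  define C where "C = sqrt (2 / real n) * cco n l"
  have "(Xmat p r n *\<^sub>v uvec n l) $ a
      = C * (\<Sum>b<n. Xbar p r n (a+1) (b+1) * sin (real l * pi / real n * (real b + 1/2)))"
    using a unfolding Xmat_def uvec_def C_def
    by (simp add: scalar_prod_def sum_distrib_left atLeast0LessThan algebra_simps)
  then show "(Xmat p r n *\<^sub>v uvec n l) $ a
      = ((real n powi (2 * int r - 1) * gsym p r (real l * pi / real n)) \<cdot>\<^sub>v uvec n l) $ a"
    using a Xbar_sine_sum[OF assms(1-4) a assms(5,6)] unfolding uvec_def C_def by (simp add: algebra_simps)
qed (simp add: Xmat_def uvec_def)

theorem mainTheorem14:
  fixes p n r :: nat
  assumes "p \<ge> 1" and "even p" and "n \<ge> p + p div 2" and "r \<le> p"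
  shows "(\<forall>j\<in>{1..n}. eigenvector (Xmat p r n) (uvec n j)
            (real n powi (2 * int r - 1) * gsym p r (real j * pi / real n)))
       \<and> (\<forall>\<mu>. eigenvalue (Xmat p r n) \<mu> \<longrightarrow>
            (\<exists>j\<in>{1..n}. \<mu> = real n powi (2 * int r - 1) * gsym p r (real j * pi / real n)))"
proof -
  have p: "p \<noteq> 0"
    using assms(1) by simp
  note eigen = Xmat_mult_uvec[OF assms(2) p assms(3,4)]
  show ?thesis
  proof (intro conjI ballI allI impI)
    fix j
    assume "j \<in> {1..n}"
    then show "eigenvector (Xmat p r n) (uvec n j) (real n powi (2 * int r - 1) * gsym p r (real j * pi / real n))"
      unfolding eigenvector_def using eigen uvec_nonzero by (auto simp: Xmat_def uvec_def)
  next
    fix \<mu>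
    assume "eigenvalue (Xmat p r n) \<mu>"
    then show "\<exists>j\<in>{1..n}. \<mu> = real n powi (2 * int r - 1) * gsym p r (real j * pi / real n)"
      by (rule eigenvalue_of_complete_eigensystem[where u="uvec n" and I="{1..n}", rotated -1])
         (use eigen Xmat_symmetric uvec_complete in \<open>auto simp: Xmat_def uvec_def\<close>)
  qed
qed

end
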